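(* Fix integers $t\geq 1$ and $r\geq 1$. Then, as $m\to\infty$ (with $m\geq r$), \[ R_t(r,m) \leq \left(1-\frac{1}{2^t}\right)2^m-\frac{\sqrt{2^t-1}}{2^t} (1+\sqrt{2})^{r-1}2^{m/2}+O(m^{r-2}), \] where the constant in the $O(\cdot)$ term may depend on $r$ and $t$.
   Context: For a $t\times n$ matrix $\mathbf{v}$ over $\mathbb{F}_q$ with rows $\overline{v}_1,\dots,\overline{v}_t$, its $t$-weight is $\mathrm{wt}^{(t)}(\mathbf{v})=\left|\bigcup_{i=1}^t \mathrm{supp}(\overline{v}_i)\right|$, and $d^{(t)}(\mathbf{u},\mathbf{v})=\mathrm{wt}^{(t)}(\mathbf{u}-\mathbf{v})$. For a linear code $C\subseteq\mathbb{F}_q^n$ and $t\in\mathbb{N}$, let $C^t$ be the set of $t\times n$ matrices all of whose rows lie in $C$. The $t$-th generalized covering radius $R_t(C)$ is the smallest integer $\rho$ such that for every $\mathbf{v}\in\mathbb{F}_q^{t\times n}$ there is $\mathbf{c}\in C^t$ with $d^{(t)}(\mathbf{v},\mathbf{c})\leq \rho$. Binary Reed–Muller codes $\mathrm{RM}(r,m)\subseteq\mathbb{F}_2^{2^m}$ ($0\le r\le m$) are defined recursively: $\mathrm{RM}(0,m)=\{\overline{0},\overline{1}\}$ (the repetition code of length $2^m$), $\mathrm{RM}(m,m)=\mathbb{F}_2^{2^m}$, and for $1\leq r\leq m-1$, $\mathrm{RM}(r,m)=\{(\overline{u},\overline{u}+\overline{v}) : \overline{u}\in \mathrm{RM}(r,m-1),\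 \overline{v}\in\mathrm{RM}(r-1,m-1)\}$. It is a linear code of length $2^m$ and dimension $\sum_{i=0}^r\binom{m}{i}$. Write $R_t(r,m)=R_t(\mathrm{RM}(r,m))$. *)

theory Defs
  imports Complex_Main
begin

text \<open>Binary vectors of length n are bool lists of length n (True = 1, False = 0);
  addition in F_2 is exclusive or, i.e. (\<noteq>) on bool.
  A t x n matrix is a list of t rows, each of length n.\<close>

fun RM :: "nat \<Rightarrow> nat \<Rightarrow> bool list set" where
  "RM 0 m = {replicate (2^m) False, replicate (2^m) True}"
| "RM (Suc r) m =
     (if m \<le> Suc r then {xs. length xs = 2^m}
      else {u @ map2 (\<noteq>) u v | u v. u \<in> RM (Suc r) (m - 1) \<and> v \<in> RM r (m - 1)})"

definition t_dist :: "nat \<Rightarrow> nat \<Rightarrow> bool list list \<Rightarrow> bool list list \<Rightarrow> nat" where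
  "t_dist t n U V = card {j. j < n \<and> (\<exists>i<t. U ! i ! j \<noteq> V ! i ! j)}"

definition is_matrix :: "nat \<Rightarrow> nat \<Rightarrow> bool list list \<Rightarrow> bool" where
  "is_matrix t n V \<longleftrightarrow> length V = t \<and> (\<forall>row\<in>set V. length row = n)"

definition gen_cov_radius :: "nat \<Rightarrow> nat \<Rightarrow> bool list set \<Rightarrow> nat" where
  "gen_cov_radius t n C = (LEAST \<rho>. \<forall>V. is_matrix t n V \<longrightarrow>
      (\<exists>Cm. is_matrix t n Cm \<and> set Cm \<subseteq> C \<and> t_dist t n V Cm \<le> \<rho>))"

definition R_RM :: "nat \<Rightarrow> nat \<Rightarrow> nat \<Rightarrow> nat" where
  "R_RM t r m = gen_cov_radius t (2^m) (RM r m)"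

end

theory Submission
  imports Defs
begin

(*
  For r = 1: the words of RM(1,m), read as +1/-1 vectors, have pairwise orthogonal columns and the
  code is closed under complement. A second-moment argument then shows that for every word v and
  every set S of coordinates some codeword agrees with v on at least (|S| + sqrt |S|)/2 coordinates
  of S. Choosing codewords for the t rows one at a time, each on the coordinates where all previous
  rows already agree, leaves at least (2^m + sqrt ((2^t - 1) 2^m)) / 2^t coordinates where all rows
  agree, which is the bound for r = 1.

  For r >= 2: the (u | u + v) construction gives R_t(r, m+1) <= R_t(r, m) + R_t(r-1, m). The main term
  satisfies this recurrence with equality, so the error terms satisfy it as well, and summing them
  over m raises their polynomial degree in m by one for each step in r.
*)

(* Left in the simp set, RM.simps(2) keeps unfolding RM (Suc r) (m - 1) under an undecided
   condition and the simplifier does not terminate. *)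
declare RM.simps(2)[simp del]

lemma RM_Suc_full: "m \<le> Suc r \<Longrightarrow> RM (Suc r) m = {xs. length xs = 2^m}"
  by (simp add: RM.simps(2))

lemma RM_Suc_Suc: "Suc r \<le> m \<Longrightarrow> RM (Suc r) (Suc m) =
    {u @ map2 (\<noteq>) u v | u v. u \<in> RM (Suc r) m \<and> v \<in> RM r m}"
  by (simp add: RM.simps(2))

lemma length_RM: "c \<in> RM r m \<Longrightarrow> length c = 2^m"
proof (induction r m arbitrary: c rule: RM.induct)
  case (2 r m)
  show ?case
  proof (cases "m \<le> Suc r")
    case False
    then obtain k where "m = Suc k" "Suc r \<le> k"
      by (cases m) auto
    with 2 show ?thesis
      by (auto simp: RM_Suc_Suc)
  qed (use 2 in \<open>simp add: RM_Suc_full\<close>)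
qed auto

lemma zero_in_RM: "replicate (2^m) False \<in> RM r m"
proof (induction r m rule: RM.induct)
  case (2 r m)
  show ?case
  proof (cases "m \<le> Suc r")
    case False
    then obtain k where m: "m = Suc k" "Suc r \<le> k"
      by (cases m) auto
    have "replicate (2^m) False = replicate (2^k) False @ map2 (\<noteq>) (replicate (2^k) False) (replicate (2^k) False)"
      by (simp add: m replicate_add[symmetric] mult_2)
    moreover have "replicate (2^k) False \<in> RM (Suc r) k" "replicate (2^k) False \<in> RM r k"
      using 2 False m by auto
    ultimately show ?thesis
      unfolding m(1) RM_Suc_Suc[OF m(2)] by blast
  qed (simp add: RM_Suc_full)
qed auto

lemma finite_RM: "finite (RM r m)"
proof (rule finite_subset)
  show "RM r m \<subseteq> {xs. set xs \<subseteq> UNIV \<and> length xs = 2^m}"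
    by (auto simp: length_RM)
qed (rule finite_lists_length_eq, simp)

lemma t_dist_le: "t_dist t n V W \<le> n"
  unfolding t_dist_def by (rule card_mono[of "{..<n}", simplified]) auto

lemma t_dist_cong:
  assumes "\<And>i j. i < t \<Longrightarrow> j < n \<Longrightarrow> (V ! i ! j \<noteq> W ! i ! j) = (V' ! i ! j \<noteq> W' ! i ! j)"
  shows "t_dist t n V W = t_dist t n V' W'"
  unfolding t_dist_def by (intro arg_cong[where f = card] Collect_cong) (use assms in blast)

lemma t_dist_append:
  assumes "is_matrix t (n1 + n2) V" "is_matrix t (n1 + n2) W"
  shows "t_dist t (n1 + n2) V W =
    t_dist t n1 (map (take n1) V) (map (take n1) W) + t_dist t n2 (map (drop n1) V) (map (drop n1) W)"
proof -
  let ?D = "\<lambda>n V W. {j. j < n \<and> (\<exists>i<t. V ! i ! j \<noteq> W ! i ! j)}"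
  have "?D (n1 + n2) V W = ?D n1 (map (take n1) V) (map (take n1) W)
      \<union> (\<lambda>j. n1 + j) ` ?D n2 (map (drop n1) V) (map (drop n1) W)"
  proof (intro equalityI subsetI)
    fix j assume "j \<in> ?D (n1 + n2) V W"
    then obtain i where i: "i < t" "j < n1 + n2" "V ! i ! j \<noteq> W ! i ! j" by blast
    have rows: "length (V ! i) = n1 + n2" "length (W ! i) = n1 + n2"
      using assms i(1) by (auto simp: is_matrix_def)
    show "j \<in> ?D n1 (map (take n1) V) (map (take n1) W)
      \<union> (\<lambda>j. n1 + j) ` ?D n2 (map (drop n1) V) (map (drop n1) W)"
    proof (cases "j < n1")
      case True
      then show ?thesis using i assms by (auto simp: is_matrix_def)
    next
      case False
      then have "j - n1 \<in> ?D n2 (map (drop n1) V) (map (drop n1) W)"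
        using i rows assms by (auto simp: is_matrix_def)
      then show ?thesis using False by (auto simp: image_iff intro!: bexI[of _ "j - n1"])
    qed
  qed (use assms in \<open>auto simp: is_matrix_def\<close>)
  moreover have "?D n1 (map (take n1) V) (map (take n1) W)
      \<inter> (\<lambda>j. n1 + j) ` ?D n2 (map (drop n1) V) (map (drop n1) W) = {}"
    by auto
  ultimately show ?thesis
    unfolding t_dist_def by (simp add: card_Un_disjoint card_image)
qed

lemma t_dist_eq_diff_agreements:
  "t_dist t n V W = n - card {x. x < n \<and> (\<forall>i<t. V ! i ! x = W ! i ! x)}"
proof -
  have "{j. j < n \<and> (\<exists>i<t. V ! i ! j \<noteq> W ! i ! j)} = {..<n} - {x. x < n \<and> (\<forall>i<t. V ! i ! x = W ! i ! x)}"
    by auto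
  then show ?thesis
    unfolding t_dist_def by (simp add: card_Diff_subset subset_eq)
qed

lemma gen_cov_radius_le:
  assumes "\<And>V. is_matrix t n V \<Longrightarrow> \<exists>W. is_matrix t n W \<and> set W \<subseteq> C \<and> t_dist t n V W \<le> \<rho>"
  shows "gen_cov_radius t n C \<le> \<rho>"
  unfolding gen_cov_radius_def by (rule Least_le) (use assms in blast)

lemma gen_cov_radius_le_real:
  fixes B :: real
  assumes "\<And>V. is_matrix t n V \<Longrightarrow> \<exists>W. is_matrix t n W \<and> set W \<subseteq> C \<and> t_dist t n V W \<le> B"
  shows "gen_cov_radius t n C \<le> B"
proof -
  have "0 \<le> B"
    using assms[of "replicate t (replicate n False)"] by (auto simp: is_matrix_def)
  have "gen_cov_radius t n C \<le> nat \<lfloor>B\<rfloor>"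
  proof (rule gen_cov_radius_le)
    fix V assume "is_matrix t n V"
    then obtain W where "is_matrix t n W" "set W \<subseteq> C" "t_dist t n V W \<le> B"
      using assms by blast
    then show "\<exists>W. is_matrix t n W \<and> set W \<subseteq> C \<and> t_dist t n V W \<le> nat \<lfloor>B\<rfloor>"
      using le_nat_floor by blast
  qed
  then show ?thesis
    using \<open>0 \<le> B\<close> by linarith
qed

lemma gen_cov_radius_attained:
  assumes "c \<in> C" "\<And>c. c \<in> C \<Longrightarrow> length c = n" "is_matrix t n V"
  shows "\<exists>W. is_matrix t n W \<and> set W \<subseteq> C \<and> t_dist t n V W \<le> gen_cov_radius t n C"
proof -
  let ?covers = "\<lambda>\<rho>. \<forall>V. is_matrix t n V \<longrightarrow> (\<exists>W. is_matrix t n W \<and> set W \<subseteq> C \<and> t_dist t n V W \<le> \<rho>)"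
  have "?covers n"
    using assms(1,2) t_dist_le by (intro allI impI exI[of _ "replicate t c"]) (auto simp: is_matrix_def)
  then have "?covers (gen_cov_radius t n C)"
    unfolding gen_cov_radius_def by (rule LeastI)
  with assms(3) show ?thesis by blast
qed

lemma gen_cov_radius_u_u_plus_v_le:
  assumes "c1 \<in> C1" "\<And>c. c \<in> C1 \<Longrightarrow> length c = n"
    and "c2 \<in> C2" "\<And>c. c \<in> C2 \<Longrightarrow> length c = n"
  shows "gen_cov_radius t (n + n) {u @ map2 (\<noteq>) u v | u v. u \<in> C1 \<and> v \<in> C2}
    \<le> gen_cov_radius t n C1 + gen_cov_radius t n C2"
proof (rule gen_cov_radius_le)
  fix V assume V: "is_matrix t (n + n) V"
  have "is_matrix t n (map (take n) V)"
    using V by (auto simp: is_matrix_def)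
  then obtain U where U: "is_matrix t n U" "set U \<subseteq> C1"
    "t_dist t n (map (take n) V) U \<le> gen_cov_radius t n C1"
    using gen_cov_radius_attained assms(1,2) by blast
  define B where "B = map2 (map2 (\<noteq>)) (map (drop n) V) U"
  have "is_matrix t n B"
    using V U(1) by (auto simp: is_matrix_def B_def set_zip)
  then obtain X where X: "is_matrix t n X" "set X \<subseteq> C2"
    "t_dist t n B X \<le> gen_cov_radius t n C2"
    using gen_cov_radius_attained assms(3,4) by blast
  define W where "W = map2 (\<lambda>u v. u @ map2 (\<noteq>) u v) U X"
  have lengths: "length (V ! i) = n + n" "length (U ! i) = n" "length (X ! i) = n"
    if "i < t" for i
    using V U(1) X(1) that by (auto simp: is_matrix_def)
  have W: "is_matrix t (n + n) W"
    using U(1) X(1) by (auto simp: is_matrix_def W_def set_zip)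
  have "set W \<subseteq> {u @ map2 (\<noteq>) u v | u v. u \<in> C1 \<and> v \<in> C2}"
    using U X by (fastforce simp: W_def is_matrix_def set_zip)
  moreover have "t_dist t n (map (take n) V) (map (take n) W) = t_dist t n (map (take n) V) U"
    using U(1) X(1) lengths by (intro t_dist_cong) (auto simp: W_def is_matrix_def)
  moreover have "t_dist t n (map (drop n) V) (map (drop n) W) = t_dist t n B X"
    using V U(1) X(1) lengths by (intro t_dist_cong) (auto simp: W_def B_def is_matrix_def)
  ultimately show "\<exists>W. is_matrix t (n + n) W \<and> set W \<subseteq> {u @ map2 (\<noteq>) u v | u v. u \<in> C1 \<and> v \<in> C2}
      \<and> t_dist t (n + n) V W \<le> gen_cov_radius t n C1 + gen_cov_radius t n C2"
    using W t_dist_append[OF V W] U(3) X(3) by (intro exI[of _ W]) auto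
qed

lemma R_RM_Suc_Suc_le:
  assumes "Suc r \<le> m"
  shows "R_RM t (Suc r) (Suc m) \<le> R_RM t (Suc r) m + R_RM t r m"
  using gen_cov_radius_u_u_plus_v_le[OF zero_in_RM length_RM zero_in_RM length_RM]
  by (simp add: R_RM_def RM_Suc_Suc[OF assms] mult_2)

definition bit_sign :: "bool \<Rightarrow> real" where
  "bit_sign b = (if b then -1 else 1)"

lemma bit_sign_mult_self: "bit_sign b * bit_sign b = 1"
  by (simp add: bit_sign_def)

lemma bit_sign_xor: "bit_sign (a \<noteq> b) = bit_sign a * bit_sign b"
  by (simp add: bit_sign_def)

definition correlation :: "nat set \<Rightarrow> bool list \<Rightarrow> bool list \<Rightarrow> real" where
  "correlation S v c = (\<Sum>x\<in>S. bit_sign (v ! x) * bit_sign (c ! x))"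

lemma correlation_eq_agreements:
  assumes "finite S"
  shows "correlation S v c = 2 * real (card {x\<in>S. v ! x = c ! x}) - real (card S)"
proof -
  have "correlation S v c = (\<Sum>x\<in>S. 2 * of_bool (v ! x = c ! x) - 1)"
    unfolding correlation_def by (intro sum.cong refl) (simp add: bit_sign_def)
  also have "\<dots> = 2 * real (card {x\<in>S. v ! x = c ! x}) - real (card S)"
    using assms by (simp add: sum_subtractf sum_distrib_left[symmetric] sum_of_bool_eq Int_def conj_commute)
  finally show ?thesis .
qed

lemma correlation_map_Not:
  assumes "S \<subseteq> {..<length c}"
  shows "correlation S v (map Not c) = - correlation S v c"
proof -
  have "correlation S v (map Not c) = (\<Sum>x\<in>S. - (bit_sign (v ! x) * bit_sign (c ! x)))"
    unfolding correlation_def using assms by (intro sum.cong refl) (auto simp: bit_sign_def)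
  then show ?thesis
    by (simp add: correlation_def sum_negf)
qed

lemma agreement_bound_doubling:
  fixes n u s s' :: real
  assumes "0 \<le> n" "1 \<le> u" and s: "(n + sqrt ((u - 1) * n)) / u \<le> s"
    and s': "s + sqrt s \<le> 2 * s'"
  shows "(n + sqrt ((2 * u - 1) * n)) / (2 * u) \<le> s'"
proof -
  have "n / u \<le> (n + sqrt ((u - 1) * n)) / u"
    using assms by (intro divide_right_mono) auto
  with s have "n / u \<le> s"
    by linarith
  have "n / u = (u * n) / u\<^sup>2"
    using assms by (simp add: power2_eq_square)
  then have "sqrt (u * n) / u = sqrt (n / u)"
    using assms by (simp add: real_sqrt_divide)
  also have "\<dots> \<le> sqrt s"
    using \<open>n / u \<le> s\<close> by simp
  finally have "sqrt (u * n) / u \<le> sqrt s" .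
  have "sqrt ((2 * u - 1) * n) = sqrt ((u - 1) * n + u * n)"
    by (simp add: algebra_simps)
  also have "\<dots> \<le> sqrt ((u - 1) * n) + sqrt (u * n)"
    using assms by (intro sqrt_add_le_add_sqrt) auto
  finally have "(n + sqrt ((2 * u - 1) * n)) / u \<le> (n + sqrt ((u - 1) * n)) / u + sqrt (u * n) / u"
    using assms by (simp add: add_divide_distrib[symmetric] divide_right_mono)
  also have "\<dots> \<le> 2 * s'"
    using s s' \<open>sqrt (u * n) / u \<le> sqrt s\<close> by linarith
  finally show ?thesis
    using assms by (simp add: field_simps)
qed

locale orthogonal_code =
  fixes C :: "bool list set" and n :: nat
  assumes finite_code: "finite C"
    and code_nonempty: "C \<noteq> {}"
    and length_code: "c \<in> C \<Longrightarrow> length c = n"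
    and map_Not_code: "c \<in> C \<Longrightarrow> map Not c \<in> C"
    and orthogonal_columns:
      "x < n \<Longrightarrow> y < n \<Longrightarrow> x \<noteq> y \<Longrightarrow> (\<Sum>c\<in>C. bit_sign (c ! x) * bit_sign (c ! y)) = 0"
begin

lemma sum_column_products:
  assumes "x < n" "y < n"
  shows "(\<Sum>c\<in>C. bit_sign (c ! x) * bit_sign (c ! y)) = (if x = y then card C else 0)"
  using assms orthogonal_columns by (simp add: bit_sign_mult_self)

lemma sum_correlation_squared:
  assumes "S \<subseteq> {..<n}"
  shows "(\<Sum>c\<in>C. (correlation S v c)\<^sup>2) = card C * card S"
proof -
  have "finite S"
    using assms finite_subset by blast
  have "(\<Sum>c\<in>C. (correlation S v c)\<^sup>2)
      = (\<Sum>c\<in>C. \<Sum>x\<in>S. \<Sum>y\<in>S. bit_sign (v ! x) * bit_sign (v ! y) * (bit_sign (c ! x) * bit_sign (c ! y)))"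
    by (simp add: correlation_def power2_eq_square sum_product mult_ac)
  also have "\<dots> = (\<Sum>x\<in>S. \<Sum>y\<in>S. bit_sign (v ! x) * bit_sign (v ! y) * (\<Sum>c\<in>C. bit_sign (c ! x) * bit_sign (c ! y)))"
    by (simp add: sum.swap[of _ C] sum_distrib_left)
  also have "\<dots> = (\<Sum>x\<in>S. \<Sum>y\<in>S. if x = y then real (card C) else 0)"
    using assms by (intro sum.cong refl) (auto simp: sum_column_products bit_sign_mult_self subset_iff)
  also have "\<dots> = card C * card S"
    using \<open>finite S\<close> by simp
  finally show ?thesis .
qed

(* Second moment: the squared correlations average to card S, so some codeword has correlation
   of absolute value at least sqrt (card S); complementing it if necessary makes it positive. *)
lemma exists_codeword_agreeing:
  assumes "S \<subseteq> {..<n}"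
  shows "\<exists>c\<in>C. card S + sqrt (card S) \<le> 2 * card {x\<in>S. v ! x = c ! x}"
proof -
  have "finite S"
    using assms finite_subset by blast
  have "\<exists>c\<in>C. card S \<le> (correlation S v c)\<^sup>2"
  proof (rule ccontr)
    assume "\<not> ?thesis"
    then have "(\<Sum>c\<in>C. (correlation S v c)\<^sup>2) < (\<Sum>c\<in>C. real (card S))"
      using finite_code code_nonempty by (intro sum_strict_mono) auto
    then show False
      using sum_correlation_squared[OF assms] by simp
  qed
  then obtain c0 where "c0 \<in> C" and c0: "card S \<le> (correlation S v c0)\<^sup>2"
    by blast
  define c where "c = (if 0 \<le> correlation S v c0 then c0 else map Not c0)"
  have "c \<in> C" "correlation S v c = \<bar>correlation S v c0\<bar>"
    using \<open>c0 \<in> C\<close> assms map_Not_code correlation_map_Not[of S c0 v]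
    by (auto simp: c_def length_code)
  moreover have "sqrt (card S) \<le> \<bar>correlation S v c0\<bar>"
    using real_sqrt_le_mono[OF c0] by simp
  ultimately show ?thesis
    using correlation_eq_agreements[OF \<open>finite S\<close>, of v c] by (intro bexI[of _ c]) auto
qed

(* The rows of W are chosen one at a time, each by exists_codeword_agreeing on the columns where
   all earlier rows agree with V. *)
lemma greedy_agreement:
  "\<exists>W. length W = j \<and> set W \<subseteq> C \<and>
    (real n + sqrt ((2^j - 1) * real n)) / 2^j \<le> card {x. x < n \<and> (\<forall>i<j. V ! i ! x = W ! i ! x)}"
proof (induction j)
  case 0
  show ?case
    by (intro exI[of _ "[]"]) simp
next
  case (Suc j)
  then obtain W where W: "length W = j" "set W \<subseteq> C"
    and bound: "(real n + sqrt ((2^j - 1) * real n)) / 2^j \<le> card {x. x < n \<and> (\<forall>i<j. V ! i ! x = W ! i ! x)}"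
    by blast
  define S where "S = {x. x < n \<and> (\<forall>i<j. V ! i ! x = W ! i ! x)}"
  obtain c where "c \<in> C" and c: "card S + sqrt (card S) \<le> 2 * card {x\<in>S. V ! j ! x = c ! x}"
    using exists_codeword_agreeing[of S "V ! j"] by (auto simp: S_def)
  have "{x. x < n \<and> (\<forall>i<Suc j. V ! i ! x = (W @ [c]) ! i ! x)} = {x\<in>S. V ! j ! x = c ! x}"
    using W(1) by (auto simp: S_def nth_append less_Suc_eq)
  moreover have "(real n + sqrt ((2 * 2^j - 1) * real n)) / (2 * 2^j) \<le> card {x\<in>S. V ! j ! x = c ! x}"
    using bound c unfolding S_def by (intro agreement_bound_doubling) auto
  ultimately show ?case
    using W \<open>c \<in> C\<close> by (intro exI[of _ "W @ [c]"]) auto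
qed

lemma gen_cov_radius_bound:
  "gen_cov_radius t n C \<le> (1 - 1 / 2^t) * real n - sqrt ((2^t - 1) * real n) / 2^t"
proof (rule gen_cov_radius_le_real)
  fix V
  obtain W where W: "length W = t" "set W \<subseteq> C"
    and bound: "(real n + sqrt ((2^t - 1) * real n)) / 2^t \<le> card {x. x < n \<and> (\<forall>i<t. V ! i ! x = W ! i ! x)}"
    using greedy_agreement by blast
  have "card {x. x < n \<and> (\<forall>i<t. V ! i ! x = W ! i ! x)} \<le> n"
    by (rule card_mono[of "{..<n}", simplified]) auto
  then have "t_dist t n V W \<le> real n - (real n + sqrt ((2^t - 1) * real n)) / 2^t"
    using bound by (simp add: t_dist_eq_diff_agreements of_nat_diff)
  also have "\<dots> = (1 - 1 / 2^t) * real n - sqrt ((2^t - 1) * real n) / 2^t"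
    by (simp add: field_simps)
  finally show "\<exists>W. is_matrix t n W \<and> set W \<subseteq> C \<and>
      t_dist t n V W \<le> (1 - 1 / 2^t) * real n - sqrt ((2^t - 1) * real n) / 2^t"
    using W length_code by (intro exI[of _ W]) (auto simp: is_matrix_def)
qed

end

definition double_word :: "bool list \<Rightarrow> bool \<Rightarrow> bool list" where
  "double_word u b = u @ map (\<lambda>x. x \<noteq> b) u"

lemma map2_xor_replicate: "length u = n \<Longrightarrow> map2 (\<noteq>) u (replicate n b) = map (\<lambda>x. x \<noteq> b) u"
  by (induction u arbitrary: n) (auto simp: Suc_length_conv)

lemma RM_1_0: "RM (Suc 0) 0 = {[False], [True]}"
  by (auto simp: RM_Suc_full length_Suc_conv)

lemma RM_1_Suc: "RM (Suc 0) (Suc m) = (\<lambda>(u, b). double_word u b) ` (RM (Suc 0) m \<times> UNIV)"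
proof (cases m)
  case 0
  have "{xs :: bool list. length xs = 2} = {[False, False], [False, True], [True, True], [True, False]}"
    by (auto simp: length_Suc_conv numeral_2_eq_2)
  then show ?thesis
    using 0 by (simp add: RM_Suc_full RM_1_0 UNIV_bool insert_commute double_word_def)
next
  case (Suc k)
  have "RM (Suc 0) (Suc m) = {u @ map2 (\<noteq>) u v | u v. u \<in> RM (Suc 0) m \<and> v \<in> RM 0 m}"
    using Suc by (simp add: RM_Suc_Suc)
  also have "\<dots> = (\<lambda>(u, b). u @ map2 (\<noteq>) u (replicate (2^m) b)) ` (RM (Suc 0) m \<times> UNIV)"
    by (auto simp: UNIV_bool)
  also have "\<dots> = (\<lambda>(u, b). double_word u b) ` (RM (Suc 0) m \<times> UNIV)"
  proof (rule image_cong[OF refl])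
    fix p :: "bool list \<times> bool"
    assume "p \<in> RM (Suc 0) m \<times> UNIV"
    then obtain u b where "p = (u, b)" "length u = 2^m"
      by (auto dest: length_RM)
    then show "(case p of (u, b) \<Rightarrow> u @ map2 (\<noteq>) u (replicate (2^m) b))
      = (case p of (u, b) \<Rightarrow> double_word u b)"
      by (simp only: prod.case map2_xor_replicate double_word_def)
  qed
  finally show ?thesis .
qed

lemma RM_1_map_Not: "c \<in> RM (Suc 0) m \<Longrightarrow> map Not c \<in> RM (Suc 0) m"
proof (induction m arbitrary: c)
  case (Suc m)
  then obtain u b where "u \<in> RM (Suc 0) m" "c = double_word u b"
    by (auto simp: RM_1_Suc)
  moreover have "map Not (double_word u b) = double_word (map Not u) b"
    by (simp add: double_word_def)
  ultimately show ?case
    using Suc.IH unfolding RM_1_Suc by (auto intro!: image_eqI[of _ _ "(map Not u, b)"])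
qed (auto simp: RM_1_0)

lemma bit_sign_nth_double_word:
  assumes "length u = n" "x < n + n"
  shows "bit_sign (double_word u b ! x) = bit_sign (u ! (x mod n)) * bit_sign (b \<and> n \<le> x)"
proof -
  have "double_word u b ! x = (u ! (x mod n) \<noteq> (b \<and> n \<le> x))"
    using assms by (auto simp: double_word_def nth_append le_mod_geq)
  then show ?thesis
    by (simp only: bit_sign_xor)
qed

lemma inj_on_double_word:
  assumes "0 < n"
  shows "inj_on (\<lambda>(u, b). double_word u b) ({u. length u = n} \<times> UNIV)"
proof (rule inj_onI)
  fix p q
  assume "p \<in> {u. length u = n} \<times> UNIV" "q \<in> {u. length u = n} \<times> UNIV"
    and "(\<lambda>(u, b). double_word u b) p = (\<lambda>(u, b). double_word u b) q"
  moreover obtain u b u' b' where pq: "p = (u, b)" "q = (u', b')"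
    by fastforce
  ultimately have lengths: "length u = n" "length u' = n"
    and eq: "u @ map (\<lambda>x. x \<noteq> b) u = u' @ map (\<lambda>x. x \<noteq> b') u'"
    by (simp_all only: mem_Sigma_iff mem_Collect_eq prod.case double_word_def)
  then have "u = u'" and halves: "map (\<lambda>x. x \<noteq> b) u = map (\<lambda>x. x \<noteq> b') u'"
    by (metis append_eq_append_conv)+
  have "u \<noteq> []"
    using lengths assms by auto
  then have "hd u \<noteq> b \<longleftrightarrow> hd u \<noteq> b'"
    using arg_cong[where f = hd, OF halves] \<open>u = u'\<close> by (simp add: hd_map)
  with \<open>u = u'\<close> show "p = q"
    by (auto simp: pq)
qed

lemma RM_1_orthogonal:
  assumes "x < 2^m" "y < 2^m" "x \<noteq> y"
  shows "(\<Sum>c\<in>RM (Suc 0) m. bit_sign (c ! x) * bit_sign (c ! y)) = 0"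
  using assms
proof (induction m arbitrary: x y)
  case 0
  then show ?case by simp
next
  case (Suc m)
  let ?n = "2^m :: nat"
  let ?corr = "\<lambda>x y. \<Sum>u\<in>RM (Suc 0) m. bit_sign (u ! x) * bit_sign (u ! y)"
  have "inj_on (\<lambda>(u, b). double_word u b) (RM (Suc 0) m \<times> UNIV)"
    by (rule inj_on_subset[OF inj_on_double_word[of ?n]]) (auto simp: length_RM)
  then have "(\<Sum>c\<in>RM (Suc 0) (Suc m). bit_sign (c ! x) * bit_sign (c ! y))
      = (\<Sum>u\<in>RM (Suc 0) m. \<Sum>b\<in>UNIV.
          bit_sign (double_word u b ! x) * bit_sign (double_word u b ! y))"
    by (simp add: RM_1_Suc sum.reindex sum.cartesian_product split_def)
  also have "\<dots> = (\<Sum>u\<in>RM (Suc 0) m. bit_sign (u ! (x mod ?n)) * bit_sign (u ! (y mod ?n))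
      * (\<Sum>b\<in>UNIV. bit_sign (b \<and> ?n \<le> x) * bit_sign (b \<and> ?n \<le> y)))"
    using Suc.prems
    by (intro sum.cong refl) (simp add: bit_sign_nth_double_word length_RM sum_distrib_left mult_ac)
  also have "\<dots> = ?corr (x mod ?n) (y mod ?n) * (1 + bit_sign (?n \<le> x) * bit_sign (?n \<le> y))"
    by (simp add: sum_distrib_right UNIV_bool bit_sign_def)
  also have "\<dots> = 0"
  proof (cases "x mod ?n = y mod ?n")
    case True
    with Suc.prems have "(?n \<le> x) \<noteq> (?n \<le> y)"
      by (cases "?n \<le> x"; cases "?n \<le> y") (simp_all add: le_mod_geq)
    then show ?thesis
      by (auto simp: bit_sign_def)
  qed (simp add: Suc.IH)
  finally show ?case .
qed

lemma orthogonal_code_RM_1: "orthogonal_code (RM (Suc 0) m) (2^m)"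
  by unfold_locales (use finite_RM zero_in_RM length_RM RM_1_map_Not RM_1_orthogonal in blast)+

lemma sqrt_power_two: "sqrt (2 ^ m) = 2 powr (real m / 2)"
  by (simp add: powr_half_sqrt[symmetric] powr_realpow[symmetric] powr_powr)

lemma R_RM_1_le:
  "R_RM t (Suc 0) m \<le> (1 - 1 / 2^t) * 2^m - sqrt (2^t - 1) / 2^t * 2 powr (real m / 2)"
proof -
  have "sqrt ((2^t - 1) * real (2^m)) = sqrt (2^t - 1) * 2 powr (real m / 2)"
    by (simp add: real_sqrt_mult sqrt_power_two)
  then show ?thesis
    using orthogonal_code.gen_cov_radius_bound[OF orthogonal_code_RM_1, of t m]
    by (simp add: R_RM_def)
qed

definition main_term :: "nat \<Rightarrow> nat \<Rightarrow> nat \<Rightarrow> real" where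
  "main_term t r m = (1 - 1 / 2^t) * 2^m
     - sqrt (2^t - 1) / 2^t * (1 + sqrt 2)^(r - 1) * 2 powr (real m / 2)"

(* 1 + sqrt 2 is the root of x * sqrt 2 = x + 1, which makes the main term satisfy the Pascal
   recurrence of R_RM_Suc_Suc_le with equality. *)
lemma main_term_Suc:
  "main_term t (Suc (Suc q)) (Suc m) = main_term t (Suc (Suc q)) m + main_term t (Suc q) m"
proof -
  have "2 powr (real (Suc m) / 2) = sqrt 2 * 2 powr (real m / 2)"
    by (simp add: add_divide_distrib powr_add powr_half_sqrt)
  moreover have "(1 + sqrt 2) * sqrt 2 = (1 + sqrt 2) + (1 :: real)"
    by (simp add: algebra_simps)
  ultimately show ?thesis
    unfolding main_term_def by (simp add: algebra_simps)
qed

lemma telescoping_le: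
  fixes F G :: "nat \<Rightarrow> real"
  assumes "\<And>k. a \<le> k \<Longrightarrow> F (Suc k) \<le> F k + G k" and "a \<le> m"
  shows "F m \<le> F a + (\<Sum>k=a..<m. G k)"
  using assms(2)
proof (induction m rule: dec_induct)
  case (step m)
  then show ?case
    using assms(1)[of m] by simp
qed simp

lemma telescoping_poly_bound:
  fixes F G :: "nat \<Rightarrow> real"
  assumes step: "\<And>k. a \<le> k \<Longrightarrow> F (Suc k) \<le> F k + G k"
    and G: "\<And>k. a \<le> k \<Longrightarrow> G k \<le> K * real k ^ q" and "0 < a"
  shows "\<exists>K'. \<forall>m\<ge>a. F m \<le> K' * real m ^ Suc q"
proof (intro exI allI impI)
  fix m assume "a \<le> m"
  have "G k \<le> max K 0 * real m ^ q" if "k \<in> {a..<m}" for k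
  proof -
    have "G k \<le> K * real k ^ q"
      using G that by simp
    also have "\<dots> \<le> max K 0 * real k ^ q"
      by (intro mult_right_mono) auto
    also have "\<dots> \<le> max K 0 * real m ^ q"
      using that by (intro mult_left_mono power_mono) auto
    finally show ?thesis .
  qed
  then have "(\<Sum>k=a..<m. G k) \<le> real (m - a) * (max K 0 * real m ^ q)"
    using sum_bounded_above[of "{a..<m}" G "max K 0 * real m ^ q"] by simp
  also have "\<dots> \<le> real m * (max K 0 * real m ^ q)"
    by (intro mult_right_mono) auto
  finally have sum_bound: "(\<Sum>k=a..<m. G k) \<le> max K 0 * real m ^ Suc q"
    by (simp add: algebra_simps)
  have "1 \<le> real m ^ Suc q"
    using \<open>0 < a\<close> \<open>a \<le> m\<close> by (intro one_le_power) simp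
  then have "F a \<le> \<bar>F a\<bar> * real m ^ Suc q"
    by (smt (verit) mult_le_cancel_left1)
  with sum_bound telescoping_le[of a F G m, OF step \<open>a \<le> m\<close>]
  show "F m \<le> (\<bar>F a\<bar> + max K 0) * real m ^ Suc q"
    by (simp add: algebra_simps)
qed

lemma pascal_recurrence_poly_bound:
  fixes E :: "nat \<Rightarrow> nat \<Rightarrow> real"
  assumes base: "\<And>m. E (Suc 0) m \<le> 0"
    and step: "\<And>r m. 0 < r \<Longrightarrow> r < m \<Longrightarrow> E (Suc r) (Suc m) \<le> E (Suc r) m + E r m"
  shows "\<exists>K. \<forall>m\<ge>Suc (Suc q). E (Suc (Suc q)) m \<le> K * real m ^ q"
proof (induction q)
  case 0
  have "E 2 m \<le> E 2 2 + (\<Sum>k=2..<m. E 1 k)" if "2 \<le> m" for m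
    using step[of 1] that by (intro telescoping_le) (simp_all add: numeral_2_eq_2)
  also have "(\<Sum>k=2..<m. E 1 k) \<le> 0" for m
    using base by (simp add: sum_nonpos)
  finally show ?case
    by (auto simp: numeral_2_eq_2)
next
  case (Suc q)
  then obtain K where "\<And>m. Suc (Suc q) \<le> m \<Longrightarrow> E (Suc (Suc q)) m \<le> K * real m ^ q"
    by blast
  then show ?case
    using step[of "Suc (Suc q)"]
    by (intro telescoping_poly_bound[where F = "E (Suc (Suc (Suc q)))" and G = "E (Suc (Suc q))" and K = K])
      auto
qed

lemma R_RM_le_main_term:
  "\<exists>K. \<forall>m\<ge>Suc (Suc q). R_RM t (Suc (Suc q)) m \<le> main_term t (Suc (Suc q)) m + K * real m ^ q"
proof -
  define E where "E r m = real (R_RM t r m) - main_term t r m" for r m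
  have "E (Suc 0) m \<le> 0" for m
    using R_RM_1_le[of t m] by (simp add: E_def main_term_def)
  moreover have "E (Suc r) (Suc m) \<le> E (Suc r) m + E r m" if "0 < r" "r < m" for r m
    using R_RM_Suc_Suc_le[of r m t] main_term_Suc[of t "r - 1" m] that by (simp add: E_def)
  ultimately show ?thesis
    using pascal_recurrence_poly_bound[of E q] by (simp add: E_def algebra_simps)
qed

theorem theorem11:
  fixes t r :: nat
  assumes "t \<ge> 1" and "r \<ge> 1"
  shows "\<exists>K::real. \<exists>M::nat. \<forall>m\<ge>M. m \<ge> r \<longrightarrow>
    real (R_RM t r m) \<le> (1 - 1 / 2^t) * 2^m
       - sqrt (2^t - 1) / 2^t * (1 + sqrt 2)^(r - 1) * 2 powr (real m / 2)
       + K * real m powr (real r - 2)"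
proof -
  consider "r = Suc 0" | q where "r = Suc (Suc q)"
    using \<open>r \<ge> 1\<close> by (cases r; cases "r - 1") auto
  then show ?thesis
  proof cases
    case 1
    then show ?thesis
      using R_RM_1_le by (intro exI[of _ 0]) simp
  next
    case 2
    then obtain K where K: "\<And>m. r \<le> m \<Longrightarrow> R_RM t r m \<le> main_term t r m + K * real m ^ q"
      using R_RM_le_main_term[of q t] by blast
    have "real m powr (real r - 2) = real m ^ q" if "r \<le> m" for m
      using that 2 by (simp add: powr_realpow)
    with K show ?thesis
      unfolding main_term_def by (intro exI[of _ K] exI[of _ 0]) auto
  qed
qed

end
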